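(* Let $\mathcal{C}$ be an Additive-CSP($\psi$) instance with $\mathrm{val}(\mathcal{C})\ge 1-\epsilon$. Then $\mathrm{GI}(G_{\mathcal{C}},G_{\mathcal{C}^0})\ge 1-\epsilon$.
   Context: $H$ is a finite abelian group, $k\ge3$, $\psi\subseteq H^k$ a balanced pairwise independent subgroup (proper subgroup of $H^k$; for $a$ uniform in $\psi$ each coordinate uniform on $H$, any two coordinates independent). An instance $\mathcal{C}=(C_1,\dots,C_m)$ on variables $x_1,\dots,x_n$ over $H$ has constraints $\psi(x_{j_1}+a_1,\dots,x_{j_k}+a_k)=1$ on distinct variables, $a_i\in H$; $\mathcal{C}^0$ sets all $a_i=0$; $\mathrm{val}(\mathcal{C})$ is the maximum fraction of constraints satisfied by an assignment. Variable gadget $\Gamma_x$ for a variable $x$: fix $H=\mathbb{Z}_{p_1}\oplus\dots\oplus\mathbb{Z}_{p_t}$ with $p_i\ge2$; vertices $x\mapsto b$ for $b\in H$. An $i$-row is a set of $p_i$ elements of $H$ agreeing in all coordinates except the $i$-th. Row part (only if $t>1$): for every $i$ and every $i$-row $R$, add a new vertex $w_R$ adjacent to all $x\mapsto b$, $b\in R$, and $i$ new vertices each adjacent only to $w_R$. Cycle part: for every $i$ and $i$-row $R$: if $p_i=2$ add an edge between its two vertices; if $p_i\ge3$, write $R=\{r_0,\dots,r_{p_i-1}\}$ with $r_j$ having $i$-th coordinate $j$, and for each $j\in\mathbb{Z}_{p_i}$ add the edge $\{x\mapsto r_j,x\mapsto r_{j+1}\}$ and two new vertices $u,v$ with edges $\{u,x\mapsto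 r_j\},\{u,x\mapsto r_{j+1}\},\{u,v\},\{v,x\mapsto r_{j+1}\}$. Graph $G_{\mathcal{C}}$: one copy of $\Gamma_{x_j}$ for each variable $x_j$; for each constraint $C_i$ on $(x_{j_1},\dots,x_{j_k})$, a set of constraint vertices, one per assignment $\alpha$ to these variables satisfying $C_i$ (distinct constraints have distinct constraint vertices), forming a clique, with each $\alpha$ adjacent to $x_{j_l}\mapsto\alpha(x_{j_l})$ for $l\in[k]$. $\mathrm{GI}(G,G')=\max_\pi\frac{|\{e\in E(G):\pi(e)\in E(G')\}|}{\max\{|E(G)|,|E(G')|\}}$ over bijections $\pi$. *)

theory Defs
  imports Complex_Main "HOL-Library.FuncSet"
begin

text \<open>H is represented concretely by the list ps = [p_0,...,p_{t-1}]; an element of H is a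
list h of length t with h!i < p_i. Coordinates are 0-indexed.\<close>

definition Hset :: "nat list \<Rightarrow> nat list set" where
  "Hset ps = {h. length h = length ps \<and> (\<forall>i<length ps. h ! i < ps ! i)}"

definition hadd :: "nat list \<Rightarrow> nat list \<Rightarrow> nat list \<Rightarrow> nat list" where
  "hadd ps h g = map (\<lambda>i. (h ! i + g ! i) mod ps ! i) [0..<length ps]"

definition hzero :: "nat list \<Rightarrow> nat list" where
  "hzero ps = replicate (length ps) 0"

definition hneg :: "nat list \<Rightarrow> nat list \<Rightarrow> nat list" where
  "hneg ps h = map (\<lambda>i. (ps ! i - h ! i) mod ps ! i) [0..<length ps]"

definition Hpow :: "nat list \<Rightarrow> nat \<Rightarrow> nat list list set" where
  "Hpow ps k = {a. length a = k \<and> set a \<subseteq> Hset ps}"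

definition tadd :: "nat list \<Rightarrow> nat list list \<Rightarrow> nat list list \<Rightarrow> nat list list" where
  "tadd ps a b = map2 (hadd ps) a b"

text \<open>psi is a proper subgroup of H^k which is balanced pairwise independent: for a uniform
in psi, each coordinate is uniform on H and any two coordinates are independent.\<close>

definition bpi_subgroup :: "nat list \<Rightarrow> nat \<Rightarrow> nat list list set \<Rightarrow> bool" where
  "bpi_subgroup ps k \<psi> \<longleftrightarrow>
     \<psi> \<subseteq> Hpow ps k \<and>
     replicate k (hzero ps) \<in> \<psi> \<and>
     (\<forall>a\<in>\<psi>. \<forall>b\<in>\<psi>. tadd ps a b \<in> \<psi>) \<and>
     (\<forall>a\<in>\<psi>. map (hneg ps) a \<in> \<psi>) \<and>
     \<psi> \<noteq> Hpow ps k \<and>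
     (\<forall>i<k. \<forall>h\<in>Hset ps. card {a\<in>\<psi>. a ! i = h} * card (Hset ps) = card \<psi>) \<and>
     (\<forall>i<k. \<forall>j<k. i \<noteq> j \<longrightarrow> (\<forall>h\<in>Hset ps. \<forall>g\<in>Hset ps.
         card {a\<in>\<psi>. a ! i = h \<and> a ! j = g} * (card (Hset ps))\<^sup>2 = card \<psi>))"

text \<open>A constraint is a pair (js, as): the variables x_{js!0},...,x_{js!(k-1)} (distinct)
and the shifts as!0,...,as!(k-1) in H.\<close>

type_synonym constr = "nat list \<times> nat list list"

definition instance_wf :: "nat list \<Rightarrow> nat \<Rightarrow> nat \<Rightarrow> constr list \<Rightarrow> bool" where
  "instance_wf ps k n C \<longleftrightarrow>
     (\<forall>c\<in>set C. length (fst c) = k \<and> distinct (fst c) \<and> set (fst c) \<subseteq> {..<n} \<and>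
                snd c \<in> Hpow ps k)"

definition satisfies :: "nat list \<Rightarrow> nat list list set \<Rightarrow> constr \<Rightarrow> (nat \<Rightarrow> nat list) \<Rightarrow> bool" where
  "satisfies ps \<psi> c \<sigma> \<longleftrightarrow> tadd ps (map \<sigma> (fst c)) (snd c) \<in> \<psi>"

definition csp_val :: "nat list \<Rightarrow> nat \<Rightarrow> nat list list set \<Rightarrow> constr list \<Rightarrow> real" where
  "csp_val ps n \<psi> C =
     Max ((\<lambda>\<sigma>. real (card {i. i < length C \<and> satisfies ps \<psi> (C ! i) \<sigma>}) / real (length C))
          ` ({..<n} \<rightarrow>\<^sub>E Hset ps))"

definition zero_instance :: "nat list \<Rightarrow> constr list \<Rightarrow> constr list" where
  "zero_instance ps C = map (\<lambda>(js, as). (js, map (\<lambda>_. hzero ps) as)) C"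

datatype vtx =
    Var nat "nat list"                   \<comment> \<open>x |-> b\<close>
  | RowW nat nat "nat list"              \<comment> \<open>w_R for variable x, coordinate i, row through r (r!i=0)\<close>
  | RowLeaf nat nat "nat list" nat       \<comment> \<open>pendant vertices attached to w_R\<close>
  | CycU nat nat "nat list" nat          \<comment> \<open>u for edge j of the cycle of row R\<close>
  | CycV nat nat "nat list" nat          \<comment> \<open>v for edge j of the cycle of row R\<close>
  | Con nat "nat list list"              \<comment> \<open>constraint vertex: constraint index, assignment alpha\<close>

text \<open>An i-row is {r[i:=j] | j < p_i} for a representative r in H with r!i = 0.
Coordinate i (0-indexed) is the paper's (i+1)-th coordinate, so its row vertex w_R gets
i+1 pendant vertices.\<close>

definition gadget_vertices :: "nat list \<Rightarrow> nat \<Rightarrow> vtx set" where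
  "gadget_vertices ps x =
     {Var x b | b. b \<in> Hset ps}
   \<union> (if length ps > 1 then
        {RowW x i r | i r. i < length ps \<and> r \<in> Hset ps \<and> r ! i = 0}
      \<union> {RowLeaf x i r l | i r l. i < length ps \<and> r \<in> Hset ps \<and> r ! i = 0 \<and> l < Suc i}
      else {})
   \<union> {CycU x i r j | i r j. i < length ps \<and> r \<in> Hset ps \<and> r ! i = 0 \<and> ps ! i \<ge> 3 \<and> j < ps ! i}
   \<union> {CycV x i r j | i r j. i < length ps \<and> r \<in> Hset ps \<and> r ! i = 0 \<and> ps ! i \<ge> 3 \<and> j < ps ! i}"

definition gadget_edges :: "nat list \<Rightarrow> nat \<Rightarrow> vtx set set" where
  "gadget_edges ps x =
     (if length ps > 1 then
        {{RowW x i r, Var x (r[i := j])} | i r j.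
            i < length ps \<and> r \<in> Hset ps \<and> r ! i = 0 \<and> j < ps ! i}
      \<union> {{RowW x i r, RowLeaf x i r l} | i r l.
            i < length ps \<and> r \<in> Hset ps \<and> r ! i = 0 \<and> l < Suc i}
      else {})
   \<union> {{Var x (r[i := 0]), Var x (r[i := 1])} | i r.
            i < length ps \<and> r \<in> Hset ps \<and> r ! i = 0 \<and> ps ! i = 2}
   \<union> {{Var x (r[i := j]), Var x (r[i := (j + 1) mod ps ! i])} | i r j.
            i < length ps \<and> r \<in> Hset ps \<and> r ! i = 0 \<and> ps ! i \<ge> 3 \<and> j < ps ! i}
   \<union> {{CycU x i r j, Var x (r[i := j])} | i r j.
            i < length ps \<and> r \<in> Hset ps \<and> r ! i = 0 \<and> ps ! i \<ge> 3 \<and> j < ps ! i}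
   \<union> {{CycU x i r j, Var x (r[i := (j + 1) mod ps ! i])} | i r j.
            i < length ps \<and> r \<in> Hset ps \<and> r ! i = 0 \<and> ps ! i \<ge> 3 \<and> j < ps ! i}
   \<union> {{CycU x i r j, CycV x i r j} | i r j.
            i < length ps \<and> r \<in> Hset ps \<and> r ! i = 0 \<and> ps ! i \<ge> 3 \<and> j < ps ! i}
   \<union> {{CycV x i r j, Var x (r[i := (j + 1) mod ps ! i])} | i r j.
            i < length ps \<and> r \<in> Hset ps \<and> r ! i = 0 \<and> ps ! i \<ge> 3 \<and> j < ps ! i}"

text \<open>Constraint vertices of constraint number c = (js, as): one per assignment alpha
(alpha!l is the value of x_{js!l}) satisfying the constraint.\<close>

definition constraint_vertices :: "nat list \<Rightarrow> nat list list set \<Rightarrow> nat \<Rightarrow> constr \<Rightarrow> vtx set" where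
  "constraint_vertices ps \<psi> c C =
     {Con c \<alpha> | \<alpha>. \<alpha> \<in> Hpow ps (length (fst C)) \<and> tadd ps \<alpha> (snd C) \<in> \<psi>}"

definition constraint_edges :: "nat list \<Rightarrow> nat list list set \<Rightarrow> nat \<Rightarrow> constr \<Rightarrow> vtx set set" where
  "constraint_edges ps \<psi> c C =
     {{u, v} | u v. u \<in> constraint_vertices ps \<psi> c C \<and> v \<in> constraint_vertices ps \<psi> c C \<and> u \<noteq> v}
   \<union> {{Con c \<alpha>, Var (fst C ! l) (\<alpha> ! l)} | \<alpha> l.
        Con c \<alpha> \<in> constraint_vertices ps \<psi> c C \<and> l < length (fst C)}"

text \<open>A graph is a pair (vertex set, edge set), edges being 2-element vertex sets.\<close>

definition graph_of :: "nat list \<Rightarrow> nat \<Rightarrow> nat list list set \<Rightarrow> constr list \<Rightarrow> vtx set \<times> vtx set set" where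
  "graph_of ps n \<psi> C =
     ((\<Union>x<n. gadget_vertices ps x) \<union> (\<Union>c<length C. constraint_vertices ps \<psi> c (C ! c)),
      (\<Union>x<n. gadget_edges ps x) \<union> (\<Union>c<length C. constraint_edges ps \<psi> c (C ! c)))"

definition GI :: "'v set \<times> 'v set set \<Rightarrow> 'w set \<times> 'w set set \<Rightarrow> real" where
  "GI G G' =
     Max ((\<lambda>\<pi>. real (card {e \<in> snd G. \<pi> ` e \<in> snd G'}) / real (max (card (snd G)) (card (snd G'))))
          ` {\<pi>. bij_betw \<pi> (fst G) (fst G')})"

end

theory Submission
  imports Defs
begin

text \<open>Fix an assignment sigma satisfying a fraction s of the constraints and translate every
  vertex by -sigma: x |-> b goes to x |-> b - sigma(x), the gadget of x is rotated along with
  it, and a constraint vertex alpha of a satisfied constraint goes to alpha - sigma(x_js), which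
  lies in psi because psi is a group. Vertices of an unsatisfied constraint are translated by
  its shift instead. This bijection between the vertex sets of the two graphs keeps all gadget
  and clique edges and all incidence edges of satisfied constraints. Every constraint has
  exactly k |psi| incidence edges in either graph, so at least s m k |psi| edges are kept while
  each graph has at most (1 - s) m k |psi| further edges; the kept fraction is at least s.\<close>

definition moduli_pos :: "nat list \<Rightarrow> bool" where
  "moduli_pos ps \<longleftrightarrow> (\<forall>i<length ps. 0 < ps ! i)"

lemma length_hadd [simp]: "length (hadd ps h g) = length ps"
  by (simp add: hadd_def)

lemma nth_hadd [simp]: "i < length ps \<Longrightarrow> hadd ps h g ! i = (h ! i + g ! i) mod ps ! i"
  by (simp add: hadd_def)

lemma length_hneg [simp]: "length (hneg ps h) = length ps"
  by (simp add: hneg_def)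

lemma nth_hneg [simp]: "i < length ps \<Longrightarrow> hneg ps h ! i = (ps ! i - h ! i) mod ps ! i"
  by (simp add: hneg_def)

lemma length_hzero [simp]: "length (hzero ps) = length ps"
  by (simp add: hzero_def)

lemma nth_hzero [simp]: "i < length ps \<Longrightarrow> hzero ps ! i = 0"
  by (simp add: hzero_def)

lemma HsetI: "length h = length ps \<Longrightarrow> (\<And>i. i < length ps \<Longrightarrow> h ! i < ps ! i) \<Longrightarrow> h \<in> Hset ps"
  by (simp add: Hset_def)

lemma HsetD:
  "h \<in> Hset ps \<Longrightarrow> length h = length ps"
  "h \<in> Hset ps \<Longrightarrow> i < length ps \<Longrightarrow> h ! i < ps ! i"
  by (auto simp: Hset_def)

lemma hadd_in_Hset: "moduli_pos ps \<Longrightarrow> hadd ps h g \<in> Hset ps"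
  by (rule HsetI) (auto simp: moduli_pos_def)

lemma hneg_in_Hset: "moduli_pos ps \<Longrightarrow> hneg ps h \<in> Hset ps"
  by (rule HsetI) (auto simp: moduli_pos_def)

lemma hzero_in_Hset: "moduli_pos ps \<Longrightarrow> hzero ps \<in> Hset ps"
  by (rule HsetI) (auto simp: moduli_pos_def)

lemma finite_Hset: "finite (Hset ps)"
proof -
  have "Hset ps \<subseteq> {h. set h \<subseteq> {..<sum_list ps} \<and> length h = length ps}"
    by (auto simp: Hset_def in_set_conv_nth) (meson elem_le_sum_list less_le_trans)
  then show ?thesis
    by (rule finite_subset) (rule finite_lists_length_eq, simp)
qed

lemma hadd_assoc: "hadd ps (hadd ps a b) c = hadd ps a (hadd ps b c)"
  by (rule nth_equalityI) (auto simp: mod_add_left_eq mod_add_right_eq add.assoc)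

lemma hadd_commute: "hadd ps a b = hadd ps b a"
  by (rule nth_equalityI) (auto simp: add.commute)

lemma hadd_hzero: "a \<in> Hset ps \<Longrightarrow> hadd ps a (hzero ps) = a"
  by (rule nth_equalityI) (auto simp: HsetD)

lemma hadd_hneg: "a \<in> Hset ps \<Longrightarrow> hadd ps a (hneg ps a) = hzero ps"
  by (rule nth_equalityI) (auto simp: HsetD less_imp_le mod_add_right_eq)

lemma hneg_unique:
  assumes "moduli_pos ps" "a \<in> Hset ps" "b \<in> Hset ps" "hadd ps a b = hzero ps"
  shows "b = hneg ps a"
proof -
  have "b = hadd ps b (hadd ps a (hneg ps a))"
    using assms by (simp add: hadd_hneg hadd_hzero)
  also have "\<dots> = hadd ps (hadd ps a b) (hneg ps a)"
    by (metis hadd_assoc hadd_commute)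
  also have "\<dots> = hneg ps a"
    using assms by (metis hadd_commute hadd_hzero hneg_in_Hset)
  finally show ?thesis .
qed

lemma hneg_hneg: "moduli_pos ps \<Longrightarrow> a \<in> Hset ps \<Longrightarrow> hneg ps (hneg ps a) = a"
  by (metis hadd_commute hadd_hneg hneg_in_Hset hneg_unique)

lemma hneg_hadd:
  assumes "moduli_pos ps" "a \<in> Hset ps" "b \<in> Hset ps"
  shows "hneg ps (hadd ps a b) = hadd ps (hneg ps a) (hneg ps b)"
proof -
  have "hadd ps (hadd ps a b) (hadd ps (hneg ps a) (hneg ps b))
      = hadd ps (hadd ps a (hneg ps a)) (hadd ps b (hneg ps b))"
    by (metis hadd_assoc hadd_commute)
  also have "\<dots> = hzero ps"
    using assms by (simp add: hadd_hneg hadd_hzero hzero_in_Hset)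
  finally show ?thesis
    using assms by (metis hadd_in_Hset hneg_unique)
qed

lemma hadd_hneg_hadd_cancel:
  assumes "moduli_pos ps" "a \<in> Hset ps" "b \<in> Hset ps" "s \<in> Hset ps"
  shows "hadd ps (hadd ps a b) (hneg ps (hadd ps s b)) = hadd ps a (hneg ps s)"
proof -
  have "hadd ps (hadd ps a b) (hneg ps (hadd ps s b))
      = hadd ps (hadd ps a (hneg ps s)) (hadd ps b (hneg ps b))"
    using assms by (simp add: hneg_hadd) (metis hadd_assoc hadd_commute)
  also have "\<dots> = hadd ps a (hneg ps s)"
    using assms by (simp add: hadd_hneg hadd_hzero hadd_in_Hset)
  finally show ?thesis .
qed

lemma length_tadd [simp]: "length (tadd ps a b) = min (length a) (length b)"
  by (simp add: tadd_def)

lemma nth_tadd [simp]: "l < length a \<Longrightarrow> l < length b \<Longrightarrow> tadd ps a b ! l = hadd ps (a ! l) (b ! l)"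
  by (simp add: tadd_def)

lemma HpowI: "length a = k \<Longrightarrow> (\<And>l. l < k \<Longrightarrow> a ! l \<in> Hset ps) \<Longrightarrow> a \<in> Hpow ps k"
  by (auto simp: Hpow_def in_set_conv_nth)

lemma HpowD:
  "a \<in> Hpow ps k \<Longrightarrow> length a = k"
  "a \<in> Hpow ps k \<Longrightarrow> l < k \<Longrightarrow> a ! l \<in> Hset ps"
  by (auto simp: Hpow_def)

lemma finite_Hpow: "finite (Hpow ps k)"
proof -
  have "Hpow ps k \<subseteq> {h. set h \<subseteq> Hset ps \<and> length h = k}"
    by (auto simp: Hpow_def)
  then show ?thesis
    by (rule finite_subset) (rule finite_lists_length_eq[OF finite_Hset])
qed

lemma tadd_in_Hpow: "moduli_pos ps \<Longrightarrow> length a = k \<Longrightarrow> length b = k \<Longrightarrow> tadd ps a b \<in> Hpow ps k"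
  by (rule HpowI) (auto simp: hadd_in_Hset)

lemma tadd_assoc:
  "length a = k \<Longrightarrow> length b = k \<Longrightarrow> length c = k \<Longrightarrow>
   tadd ps (tadd ps a b) c = tadd ps a (tadd ps b c)"
  by (rule nth_equalityI) (auto simp: hadd_assoc)

lemma tadd_commute: "length a = length b \<Longrightarrow> tadd ps a b = tadd ps b a"
  by (rule nth_equalityI) (auto simp: hadd_commute)

definition tzero :: "nat list \<Rightarrow> nat \<Rightarrow> nat list list" where
  "tzero ps k = replicate k (hzero ps)"

definition tneg :: "nat list \<Rightarrow> nat list list \<Rightarrow> nat list list" where
  "tneg ps a = map (hneg ps) a"

lemma length_tneg [simp]: "length (tneg ps a) = length a"
  by (simp add: tneg_def)

lemma nth_tneg [simp]: "l < length a \<Longrightarrow> tneg ps a ! l = hneg ps (a ! l)"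
  by (simp add: tneg_def)

lemma length_tzero [simp]: "length (tzero ps k) = k"
  by (simp add: tzero_def)

lemma tadd_tzero: "a \<in> Hpow ps k \<Longrightarrow> tadd ps a (tzero ps k) = a"
  by (rule nth_equalityI) (auto simp: tzero_def HpowD hadd_hzero)

lemma tadd_tneg: "a \<in> Hpow ps k \<Longrightarrow> tadd ps a (tneg ps a) = tzero ps k"
  by (rule nth_equalityI) (auto simp: tzero_def HpowD hadd_hneg)

lemma tneg_in_Hpow: "moduli_pos ps \<Longrightarrow> length a = k \<Longrightarrow> tneg ps a \<in> Hpow ps k"
  by (rule HpowI) (auto simp: hneg_in_Hset)

lemma tadd_tneg_cancel:
  assumes "a \<in> Hpow ps k" "b \<in> Hpow ps k"
  shows "tadd ps (tadd ps a b) (tneg ps b) = a"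
  using assms by (simp add: tadd_assoc HpowD tadd_tneg tadd_tzero)

lemma tneg_tneg: "moduli_pos ps \<Longrightarrow> a \<in> Hpow ps k \<Longrightarrow> tneg ps (tneg ps a) = a"
  by (rule nth_equalityI) (auto simp: HpowD hneg_hneg)

locale bpi_group =
  fixes ps :: "nat list" and k :: nat and \<psi> :: "nat list list set"
  assumes moduli_pos: "moduli_pos ps" and bpi: "bpi_subgroup ps k \<psi>"
begin

lemma psi_subset_Hpow: "\<psi> \<subseteq> Hpow ps k"
  using bpi by (simp add: bpi_subgroup_def)

lemma tadd_in_psi: "a \<in> \<psi> \<Longrightarrow> b \<in> \<psi> \<Longrightarrow> tadd ps a b \<in> \<psi>"
  using bpi by (simp add: bpi_subgroup_def)

lemma tneg_in_psi: "a \<in> \<psi> \<Longrightarrow> tneg ps a \<in> \<psi>"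
  using bpi by (simp add: bpi_subgroup_def tneg_def)

lemma tzero_in_psi: "tzero ps k \<in> \<psi>"
  using bpi by (simp add: bpi_subgroup_def tzero_def)

lemma tzero_in_Hpow: "tzero ps k \<in> Hpow ps k"
  using psi_subset_Hpow tzero_in_psi by blast

lemma card_psi_pos: "0 < card \<psi>"
  using finite_Hpow psi_subset_Hpow tzero_in_psi
  by (metis card_gt_0_iff empty_iff finite_subset)

lemma card_coset:
  assumes as: "as \<in> Hpow ps k"
  shows "card {\<alpha> \<in> Hpow ps k. tadd ps \<alpha> as \<in> \<psi>} = card \<psi>"
proof -
  have "bij_betw (\<lambda>\<alpha>. tadd ps \<alpha> as) {\<alpha> \<in> Hpow ps k. tadd ps \<alpha> as \<in> \<psi>} \<psi>"
  proof (rule bij_betw_byWitness[where f'="\<lambda>\<beta>. tadd ps \<beta> (tneg ps as)"])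
    have "tadd ps (tadd ps \<beta> (tneg ps as)) as = \<beta>" if "\<beta> \<in> Hpow ps k" for \<beta>
      using tadd_tneg_cancel[OF that tneg_in_Hpow[OF moduli_pos HpowD(1)[OF as]]] as
      by (simp add: tneg_tneg moduli_pos)
    then show "\<forall>\<beta>\<in>\<psi>. tadd ps (tadd ps \<beta> (tneg ps as)) as = \<beta>"
      using psi_subset_Hpow by blast
    show "\<forall>\<alpha>\<in>{\<alpha> \<in> Hpow ps k. tadd ps \<alpha> as \<in> \<psi>}. tadd ps (tadd ps \<alpha> as) (tneg ps as) = \<alpha>"
      using as by (auto simp: tadd_tneg_cancel)
    show "(\<lambda>\<beta>. tadd ps \<beta> (tneg ps as)) ` \<psi> \<subseteq> {\<alpha> \<in> Hpow ps k. tadd ps \<alpha> as \<in> \<psi>}"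
      using \<open>\<forall>\<beta>\<in>\<psi>. _\<close> psi_subset_Hpow as moduli_pos
      by (auto simp: HpowD intro!: tadd_in_Hpow)
  qed auto
  then show ?thesis
    by (rule bij_betw_same_card)
qed

end

text \<open>The translate of the i-row with representative r (where r_i = 0) by d is the i-row with
  representative (r + d)[i := 0]; the position j on its cycle moves to j + d_i.\<close>

fun shift_vtx :: "nat list \<Rightarrow> (nat \<Rightarrow> nat list) \<Rightarrow> (nat \<Rightarrow> nat list list) \<Rightarrow> vtx \<Rightarrow> vtx" where
  "shift_vtx ps D e (Var x b) = Var x (hadd ps b (D x))"
| "shift_vtx ps D e (RowW x i r) = RowW x i ((hadd ps r (D x))[i := 0])"
| "shift_vtx ps D e (RowLeaf x i r l) = RowLeaf x i ((hadd ps r (D x))[i := 0]) l"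
| "shift_vtx ps D e (CycU x i r j) = CycU x i ((hadd ps r (D x))[i := 0]) ((j + D x ! i) mod ps ! i)"
| "shift_vtx ps D e (CycV x i r j) = CycV x i ((hadd ps r (D x))[i := 0]) ((j + D x ! i) mod ps ! i)"
| "shift_vtx ps D e (Con c \<alpha>) = Con c (tadd ps \<alpha> (e c))"

lemma Var_in_graph_iff:
  "Var x b \<in> fst (graph_of ps n \<psi> C) \<longleftrightarrow> x < n \<and> b \<in> Hset ps"
  by (auto simp: graph_of_def gadget_vertices_def constraint_vertices_def)

lemma RowW_in_graph_iff:
  "RowW x i r \<in> fst (graph_of ps n \<psi> C) \<longleftrightarrow>
     x < n \<and> 1 < length ps \<and> i < length ps \<and> r \<in> Hset ps \<and> r ! i = 0"
  by (auto simp: graph_of_def gadget_vertices_def constraint_vertices_def)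

lemma RowLeaf_in_graph_iff:
  "RowLeaf x i r l \<in> fst (graph_of ps n \<psi> C) \<longleftrightarrow>
     x < n \<and> 1 < length ps \<and> i < length ps \<and> r \<in> Hset ps \<and> r ! i = 0 \<and> l < Suc i"
  by (auto simp: graph_of_def gadget_vertices_def constraint_vertices_def)

lemma CycU_in_graph_iff:
  "CycU x i r j \<in> fst (graph_of ps n \<psi> C) \<longleftrightarrow>
     x < n \<and> i < length ps \<and> r \<in> Hset ps \<and> r ! i = 0 \<and> 3 \<le> ps ! i \<and> j < ps ! i"
  by (auto simp: graph_of_def gadget_vertices_def constraint_vertices_def)

lemma CycV_in_graph_iff:
  "CycV x i r j \<in> fst (graph_of ps n \<psi> C) \<longleftrightarrow>
     x < n \<and> i < length ps \<and> r \<in> Hset ps \<and> r ! i = 0 \<and> 3 \<le> ps ! i \<and> j < ps ! i"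
  by (auto simp: graph_of_def gadget_vertices_def constraint_vertices_def)

lemma Con_in_constraint_vertices_iff:
  "Con c' \<alpha> \<in> constraint_vertices ps \<psi> c X \<longleftrightarrow>
     c' = c \<and> \<alpha> \<in> Hpow ps (length (fst X)) \<and> tadd ps \<alpha> (snd X) \<in> \<psi>"
  by (auto simp: constraint_vertices_def)

lemma Con_in_graph_iff:
  "Con c \<alpha> \<in> fst (graph_of ps n \<psi> C) \<longleftrightarrow>
     c < length C \<and> \<alpha> \<in> Hpow ps (length (fst (C ! c))) \<and> tadd ps \<alpha> (snd (C ! c)) \<in> \<psi>"
  by (auto simp: graph_of_def gadget_vertices_def constraint_vertices_def split: if_splits)

lemmas in_graph_iff = Var_in_graph_iff RowW_in_graph_iff RowLeaf_in_graph_iff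
  CycU_in_graph_iff CycV_in_graph_iff Con_in_graph_iff

lemma constraint_vertex_is_Con: "u \<in> constraint_vertices ps \<psi> c X \<Longrightarrow> \<exists>\<alpha>. u = Con c \<alpha>"
  by (auto simp: constraint_vertices_def)

lemma row_rep_in_Hset: "moduli_pos ps \<Longrightarrow> i < length ps \<Longrightarrow> (hadd ps r d)[i := 0] \<in> Hset ps"
  by (rule HsetI) (auto simp: moduli_pos_def nth_list_update)

lemma mod_modulus_less: "moduli_pos ps \<Longrightarrow> i < length ps \<Longrightarrow> a mod ps ! i < ps ! i"
  by (simp add: moduli_pos_def)

lemma finite_gadget_vertices: "finite (gadget_vertices ps x)"
proof -
  let ?H = "Hset ps" and ?I = "{..<length ps}" and ?J = "{..<sum_list ps + length ps}"
  have "gadget_vertices ps x \<subseteq> Var x ` ?H \<union> (\<lambda>(i, r). RowW x i r) ` (?I \<times> ?H)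
     \<union> (\<lambda>(i, r, l). RowLeaf x i r l) ` (?I \<times> ?H \<times> ?J)
     \<union> (\<lambda>(i, r, j). CycU x i r j) ` (?I \<times> ?H \<times> ?J)
     \<union> (\<lambda>(i, r, j). CycV x i r j) ` (?I \<times> ?H \<times> ?J)"
    unfolding gadget_vertices_def
    by (auto simp: image_iff split: if_splits)
      (meson elem_le_sum_list less_le_trans trans_less_add1)+
  then show ?thesis
    by (rule finite_subset) (simp add: finite_Hset)
qed

lemma finite_graph_vertices: "finite (fst (graph_of ps n \<psi> C))"
proof -
  have "constraint_vertices ps \<psi> c X \<subseteq> Con c ` Hpow ps (length (fst X))" for c X
    by (auto simp: constraint_vertices_def)
  then have "finite (constraint_vertices ps \<psi> c X)" for c X
    using finite_Hpow finite_subset by blast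
  then show ?thesis
    by (simp add: graph_of_def finite_gadget_vertices)
qed

lemma gadget_edge_cases:
  assumes "f \<in> gadget_edges ps x"
  obtains (row) i r j where "1 < length ps" "i < length ps" "r \<in> Hset ps" "r ! i = 0" "j < ps ! i"
      "f = {RowW x i r, Var x (r[i := j])}"
  | (leaf) i r l where "1 < length ps" "i < length ps" "r \<in> Hset ps" "r ! i = 0" "l < Suc i"
      "f = {RowW x i r, RowLeaf x i r l}"
  | (pair) i r where "i < length ps" "r \<in> Hset ps" "r ! i = 0" "ps ! i = 2"
      "f = {Var x (r[i := 0]), Var x (r[i := 1])}"
  | (cycle) i r j where "i < length ps" "r \<in> Hset ps" "r ! i = 0" "3 \<le> ps ! i" "j < ps ! i"
      "f = {Var x (r[i := j]), Var x (r[i := (j + 1) mod ps ! i])}"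
  | (u_left) i r j where "i < length ps" "r \<in> Hset ps" "r ! i = 0" "3 \<le> ps ! i" "j < ps ! i"
      "f = {CycU x i r j, Var x (r[i := j])}"
  | (u_right) i r j where "i < length ps" "r \<in> Hset ps" "r ! i = 0" "3 \<le> ps ! i" "j < ps ! i"
      "f = {CycU x i r j, Var x (r[i := (j + 1) mod ps ! i])}"
  | (uv) i r j where "i < length ps" "r \<in> Hset ps" "r ! i = 0" "3 \<le> ps ! i" "j < ps ! i"
      "f = {CycU x i r j, CycV x i r j}"
  | (v_right) i r j where "i < length ps" "r \<in> Hset ps" "r ! i = 0" "3 \<le> ps ! i" "j < ps ! i"
      "f = {CycV x i r j, Var x (r[i := (j + 1) mod ps ! i])}"
  using assms unfolding gadget_edges_def by (auto split: if_splits)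

text \<open>The gadget edge set is a left-nested union of seven families; each introduction rule
  selects its family explicitly, as automation searching the whole union is far too slow.\<close>

lemma gadget_edgeI_row:
  "1 < length ps \<Longrightarrow> i < length ps \<Longrightarrow> r \<in> Hset ps \<Longrightarrow> r ! i = 0 \<Longrightarrow> j < ps ! i \<Longrightarrow>
   f = {RowW x i r, Var x (r[i := j])} \<Longrightarrow> f \<in> gadget_edges ps x"
  unfolding gadget_edges_def by (intro UnI1, simp only: if_True, rule UnI1) blast

lemma gadget_edgeI_leaf:
  "1 < length ps \<Longrightarrow> i < length ps \<Longrightarrow> r \<in> Hset ps \<Longrightarrow> r ! i = 0 \<Longrightarrow> l < Suc i \<Longrightarrow>
   f = {RowW x i r, RowLeaf x i r l} \<Longrightarrow> f \<in> gadget_edges ps x"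
  unfolding gadget_edges_def by (intro UnI1, simp only: if_True, rule UnI2) blast

lemma gadget_edgeI_pair:
  "i < length ps \<Longrightarrow> r \<in> Hset ps \<Longrightarrow> r ! i = 0 \<Longrightarrow> ps ! i = 2 \<Longrightarrow>
   f = {Var x (r[i := 0]), Var x (r[i := 1])} \<Longrightarrow> f \<in> gadget_edges ps x"
  unfolding gadget_edges_def by (rule UnI1, rule UnI1, rule UnI1, rule UnI1, rule UnI1, rule UnI2) blast

lemma gadget_edgeI_cycle:
  "i < length ps \<Longrightarrow> r \<in> Hset ps \<Longrightarrow> r ! i = 0 \<Longrightarrow> 3 \<le> ps ! i \<Longrightarrow> j < ps ! i \<Longrightarrow>
   f = {Var x (r[i := j]), Var x (r[i := (j + 1) mod ps ! i])} \<Longrightarrow> f \<in> gadget_edges ps x"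
  unfolding gadget_edges_def by (rule UnI1, rule UnI1, rule UnI1, rule UnI1, rule UnI2) blast

lemma gadget_edgeI_u_left:
  "i < length ps \<Longrightarrow> r \<in> Hset ps \<Longrightarrow> r ! i = 0 \<Longrightarrow> 3 \<le> ps ! i \<Longrightarrow> j < ps ! i \<Longrightarrow>
   f = {CycU x i r j, Var x (r[i := j])} \<Longrightarrow> f \<in> gadget_edges ps x"
  unfolding gadget_edges_def by (rule UnI1, rule UnI1, rule UnI1, rule UnI2) blast

lemma gadget_edgeI_u_right:
  "i < length ps \<Longrightarrow> r \<in> Hset ps \<Longrightarrow> r ! i = 0 \<Longrightarrow> 3 \<le> ps ! i \<Longrightarrow> j < ps ! i \<Longrightarrow>
   f = {CycU x i r j, Var x (r[i := (j + 1) mod ps ! i])} \<Longrightarrow> f \<in> gadget_edges ps x"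
  unfolding gadget_edges_def by (rule UnI1, rule UnI1, rule UnI2) blast

lemma gadget_edgeI_uv:
  "i < length ps \<Longrightarrow> r \<in> Hset ps \<Longrightarrow> r ! i = 0 \<Longrightarrow> 3 \<le> ps ! i \<Longrightarrow> j < ps ! i \<Longrightarrow>
   f = {CycU x i r j, CycV x i r j} \<Longrightarrow> f \<in> gadget_edges ps x"
  unfolding gadget_edges_def by (rule UnI1, rule UnI2) blast

lemma gadget_edgeI_v_right:
  "i < length ps \<Longrightarrow> r \<in> Hset ps \<Longrightarrow> r ! i = 0 \<Longrightarrow> 3 \<le> ps ! i \<Longrightarrow> j < ps ! i \<Longrightarrow>
   f = {CycV x i r j, Var x (r[i := (j + 1) mod ps ! i])} \<Longrightarrow> f \<in> gadget_edges ps x"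
  unfolding gadget_edges_def by (rule UnI2) blast

lemma hadd_list_update:
  "length r = length ps \<Longrightarrow> i < length ps \<Longrightarrow>
   hadd ps (r[i := j]) d = (hadd ps r d)[i := (j + d ! i) mod ps ! i]"
  by (rule nth_equalityI) (auto simp: nth_list_update)

lemma mod_Suc_add_mod: "(Suc j mod p + d) mod p = Suc ((j + d) mod p) mod (p::nat)"
  by (metis Suc_eq_plus1 add.commute add.left_commute mod_add_left_eq)

lemma shift_gadget_edge:
  assumes pos: "moduli_pos ps" and D: "D x \<in> Hset ps" and f: "f \<in> gadget_edges ps x"
  shows "shift_vtx ps D e ` f \<in> gadget_edges ps x"
  using f
proof (cases rule: gadget_edge_cases)
  case (row i r j)
  then show ?thesis
    by (intro gadget_edgeI_row[where i=i and r="(hadd ps r (D x))[i := 0]" and j="(j + D x ! i) mod ps ! i"])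
      (auto simp: row_rep_in_Hset pos mod_modulus_less hadd_list_update HsetD)
next
  case (leaf i r l)
  then show ?thesis
    by (intro gadget_edgeI_leaf[where i=i and r="(hadd ps r (D x))[i := 0]"]) (auto simp: row_rep_in_Hset pos)
next
  case (pair i r)
  have "D x ! i < 2"
    using D pair HsetD by metis
  then consider "D x ! i = 0" | "D x ! i = 1"
    by linarith
  then show ?thesis
    by cases (use pair in \<open>intro gadget_edgeI_pair[where i=i and r="(hadd ps r (D x))[i := 0]"];
        auto simp: row_rep_in_Hset pos hadd_list_update HsetD\<close>)+
next
  case (cycle i r j)
  then show ?thesis
    by (intro gadget_edgeI_cycle[where i=i and r="(hadd ps r (D x))[i := 0]" and j="(j + D x ! i) mod ps ! i"])
      (auto simp: row_rep_in_Hset pos mod_modulus_less hadd_list_update HsetD mod_Suc_add_mod)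
next
  case (u_left i r j)
  then show ?thesis
    by (intro gadget_edgeI_u_left[where i=i and r="(hadd ps r (D x))[i := 0]" and j="(j + D x ! i) mod ps ! i"])
      (auto simp: row_rep_in_Hset pos mod_modulus_less hadd_list_update HsetD)
next
  case (u_right i r j)
  then show ?thesis
    by (intro gadget_edgeI_u_right[where i=i and r="(hadd ps r (D x))[i := 0]" and j="(j + D x ! i) mod ps ! i"])
      (auto simp: row_rep_in_Hset pos mod_modulus_less hadd_list_update HsetD mod_Suc_add_mod)
next
  case (uv i r j)
  then show ?thesis
    by (intro gadget_edgeI_uv[where i=i and r="(hadd ps r (D x))[i := 0]" and j="(j + D x ! i) mod ps ! i"])
      (auto simp: row_rep_in_Hset pos mod_modulus_less)
next
  case (v_right i r j)
  then show ?thesis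
    by (intro gadget_edgeI_v_right[where i=i and r="(hadd ps r (D x))[i := 0]" and j="(j + D x ! i) mod ps ! i"])
      (auto simp: row_rep_in_Hset pos mod_modulus_less hadd_list_update HsetD mod_Suc_add_mod)
qed

lemma Con_notin_gadget_edge: "f \<in> gadget_edges ps x \<Longrightarrow> Con c \<alpha> \<notin> f"
  by (erule gadget_edge_cases) auto

lemma gadget_edge_subset_vertices:
  "x < n \<Longrightarrow> moduli_pos ps \<Longrightarrow> f \<in> gadget_edges ps x \<Longrightarrow> f \<subseteq> fst (graph_of ps n \<psi> C)"
  by (erule gadget_edge_cases)
    (auto simp: in_graph_iff HsetD moduli_pos_def nth_list_update intro!: HsetI)

definition clique_edges :: "nat list \<Rightarrow> nat list list set \<Rightarrow> constr list \<Rightarrow> nat \<Rightarrow> vtx set set" where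
  "clique_edges ps \<psi> C c =
     {{u, v} | u v. u \<in> constraint_vertices ps \<psi> c (C ! c) \<and> v \<in> constraint_vertices ps \<psi> c (C ! c) \<and> u \<noteq> v}"

definition incidence_edges :: "nat list \<Rightarrow> nat list list set \<Rightarrow> constr list \<Rightarrow> nat \<Rightarrow> vtx set set" where
  "incidence_edges ps \<psi> C c =
     {{Con c \<alpha>, Var (fst (C ! c) ! l) (\<alpha> ! l)} | \<alpha> l.
        Con c \<alpha> \<in> constraint_vertices ps \<psi> c (C ! c) \<and> l < length (fst (C ! c))}"

definition incidence_edges_outside :: "nat list \<Rightarrow> nat list list set \<Rightarrow> constr list \<Rightarrow> nat set \<Rightarrow> vtx set set" where
  "incidence_edges_outside ps \<psi> C G = (\<Union>c\<in>{..<length C} - G. incidence_edges ps \<psi> C c)"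

lemma graph_edges_eq:
  "snd (graph_of ps n \<psi> C) =
     (\<Union>x<n. gadget_edges ps x) \<union> (\<Union>c<length C. clique_edges ps \<psi> C c \<union> incidence_edges ps \<psi> C c)"
  by (simp add: graph_of_def constraint_edges_def clique_edges_def incidence_edges_def)

lemma graph_edge_cases:
  assumes "f \<in> snd (graph_of ps n \<psi> C)"
  obtains (gadget) x where "x < n" "f \<in> gadget_edges ps x"
  | (clique) c where "c < length C" "f \<in> clique_edges ps \<psi> C c"
  | (incidence) c where "c < length C" "f \<in> incidence_edges ps \<psi> C c"
  using assms by (auto simp: graph_edges_eq)

lemma incidence_edge_shape: "f \<in> incidence_edges ps \<psi> C c \<Longrightarrow> \<exists>\<alpha> y b. f = {Con c \<alpha>, Var y b}"
  by (auto simp: incidence_edges_def)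

lemma incidence_edges_outside_shape:
  "f \<in> incidence_edges_outside ps \<psi> C G \<Longrightarrow> \<exists>c \<alpha> y b. c \<notin> G \<and> f = {Con c \<alpha>, Var y b}"
  by (auto simp: incidence_edges_outside_def incidence_edges_def)

lemma instance_wfD:
  assumes "instance_wf ps k n C" "c < length C"
  shows "length (fst (C ! c)) = k" "distinct (fst (C ! c))" "set (fst (C ! c)) \<subseteq> {..<n}"
    "snd (C ! c) \<in> Hpow ps k"
  using assms by (auto simp: instance_wf_def)

lemma incidence_edges_disjoint:
  assumes "c \<noteq> c'"
  shows "incidence_edges ps \<psi> C c \<inter> incidence_edges ps \<psi> C c' = {}"
proof (rule equals0I)
  fix f
  assume "f \<in> incidence_edges ps \<psi> C c \<inter> incidence_edges ps \<psi> C c'"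
  then obtain \<alpha> y b \<alpha>' y' b' where "f = {Con c \<alpha>, Var y b}" "f = {Con c' \<alpha>', Var y' b'}"
    by (meson IntD1 IntD2 incidence_edge_shape)
  then show False
    using assms by (auto simp: doubleton_eq_iff)
qed

lemma incidence_edges_outside_disjoint:
  assumes "c \<in> G"
  shows "incidence_edges ps \<psi> C c \<inter> incidence_edges_outside ps \<psi> C G = {}"
proof (rule equals0I)
  fix f
  assume "f \<in> incidence_edges ps \<psi> C c \<inter> incidence_edges_outside ps \<psi> C G"
  then obtain \<alpha> y b c' \<alpha>' y' b' where "f = {Con c \<alpha>, Var y b}" "c' \<notin> G" "f = {Con c' \<alpha>', Var y' b'}"
    by (meson IntD1 IntD2 incidence_edge_shape incidence_edges_outside_shape)
  then show False
    using assms by (auto simp: doubleton_eq_iff)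
qed

lemma gadget_edge_notin_outside:
  assumes "f \<in> gadget_edges ps x"
  shows "f \<notin> incidence_edges_outside ps \<psi> C G"
proof
  assume "f \<in> incidence_edges_outside ps \<psi> C G"
  then obtain c \<alpha> y b where "f = {Con c \<alpha>, Var y b}"
    using incidence_edges_outside_shape by blast
  then show False
    using Con_notin_gadget_edge[OF assms, of c \<alpha>] by simp
qed

lemma clique_edge_notin_outside:
  assumes "f \<in> clique_edges ps \<psi> C c"
  shows "f \<notin> incidence_edges_outside ps \<psi> C G"
proof
  assume "f \<in> incidence_edges_outside ps \<psi> C G"
  then obtain c' \<alpha> y b where "f = {Con c' \<alpha>, Var y b}"
    using incidence_edges_outside_shape by blast
  then have "Var y b \<in> f"
    by simp
  moreover obtain u v where "u \<in> constraint_vertices ps \<psi> c (C ! c)" "v \<in> constraint_vertices ps \<psi> c (C ! c)"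
    "f = {u, v}"
    using assms by (auto simp: clique_edges_def)
  ultimately show False
    using constraint_vertex_is_Con by blast
qed

context bpi_group
begin

lemma graph_edges_subset_Pow:
  assumes wf: "instance_wf ps k n C"
  shows "snd (graph_of ps n \<psi> C) \<subseteq> Pow (fst (graph_of ps n \<psi> C))"
proof
  fix f
  assume "f \<in> snd (graph_of ps n \<psi> C)"
  then show "f \<in> Pow (fst (graph_of ps n \<psi> C))"
  proof (cases rule: graph_edge_cases)
    case gadget
    then show ?thesis
      using gadget_edge_subset_vertices moduli_pos by blast
  next
    case clique
    then show ?thesis
      by (auto simp: clique_edges_def graph_of_def)
  next
    case (incidence c)
    then obtain \<alpha> l where \<alpha>: "Con c \<alpha> \<in> constraint_vertices ps \<psi> c (C ! c)"
      and l: "l < length (fst (C ! c))" and f: "f = {Con c \<alpha>, Var (fst (C ! c) ! l) (\<alpha> ! l)}"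
      by (auto simp: incidence_edges_def)
    have "fst (C ! c) ! l < n"
      using instance_wfD[OF wf incidence(1)] l by (meson lessThan_iff nth_mem subsetD)
    then show ?thesis
      using \<alpha> l f incidence(1)
      by (auto simp: in_graph_iff Con_in_constraint_vertices_iff HpowD)
  qed
qed

lemma finite_graph_edges: "instance_wf ps k n C \<Longrightarrow> finite (snd (graph_of ps n \<psi> C))"
  using graph_edges_subset_Pow finite_graph_vertices by (meson finite_Pow_iff finite_subset)

lemma card_incidence_edges:
  assumes wf: "instance_wf ps k n C" and c: "c < length C"
  shows "card (incidence_edges ps \<psi> C c) = k * card \<psi>"
proof -
  let ?js = "fst (C ! c)" and ?A = "{\<alpha> \<in> Hpow ps k. tadd ps \<alpha> (snd (C ! c)) \<in> \<psi>}"
  let ?edge = "\<lambda>(\<alpha>, l). {Con c \<alpha>, Var (?js ! l) (\<alpha> ! l)}"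
  note js = instance_wfD[OF wf c]
  have eq: "incidence_edges ps \<psi> C c = ?edge ` (?A \<times> {..<k})"
    using js by (auto simp: incidence_edges_def Con_in_constraint_vertices_iff image_iff)
  have "inj_on ?edge (?A \<times> {..<k})"
    using js by (auto intro!: inj_onI simp: doubleton_eq_iff nth_eq_iff_index_eq)
  then show ?thesis
    using eq card_coset[OF js(4)] by (simp add: card_image card_cartesian_product)
qed

lemma finite_incidence_edges: "finite (incidence_edges ps \<psi> C c)"
proof -
  have "incidence_edges ps \<psi> C c \<subseteq> (\<lambda>(\<alpha>, l). {Con c \<alpha>, Var (fst (C ! c) ! l) (\<alpha> ! l)})
      ` (Hpow ps (length (fst (C ! c))) \<times> {..<length (fst (C ! c))})"
    by (auto simp: incidence_edges_def Con_in_constraint_vertices_iff)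
  then show ?thesis
    by (rule finite_subset) (simp add: finite_Hpow)
qed

lemma card_incidence_edges_outside:
  assumes wf: "instance_wf ps k n C" and G: "G \<subseteq> {..<length C}"
  shows "card (incidence_edges_outside ps \<psi> C G) \<le> (length C - card G) * (k * card \<psi>)"
proof -
  have "card (incidence_edges_outside ps \<psi> C G)
      \<le> (\<Sum>c\<in>{..<length C} - G. card (incidence_edges ps \<psi> C c))"
    unfolding incidence_edges_outside_def by (rule card_UN_le) simp
  also have "\<dots> = (\<Sum>c\<in>{..<length C} - G. k * card \<psi>)"
    using card_incidence_edges[OF wf] by (intro sum.cong) auto
  finally show ?thesis
    using G by (simp add: card_Diff_subset finite_subset)
qed

lemma card_UN_incidence_edges:
  assumes wf: "instance_wf ps k n C" and G: "G \<subseteq> {..<length C}"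
  shows "card (\<Union>c\<in>G. incidence_edges ps \<psi> C c) = card G * (k * card \<psi>)"
proof -
  have "card (\<Union>c\<in>G. incidence_edges ps \<psi> C c) = (\<Sum>c\<in>G. card (incidence_edges ps \<psi> C c))"
    using G finite_subset incidence_edges_disjoint
    by (intro card_UN_disjoint) (auto simp: finite_incidence_edges)
  also have "\<dots> = (\<Sum>c\<in>G. k * card \<psi>)"
    using G card_incidence_edges[OF wf] by (intro sum.cong) auto
  finally show ?thesis
    by simp
qed

lemma card_kept_edges:
  assumes wf: "instance_wf ps k n C" and G: "G \<subseteq> {..<length C}"
  shows "card G * (k * card \<psi>) \<le> card (snd (graph_of ps n \<psi> C) - incidence_edges_outside ps \<psi> C G)"
proof -
  have "(\<Union>c\<in>G. incidence_edges ps \<psi> C c) \<subseteq> snd (graph_of ps n \<psi> C) - incidence_edges_outside ps \<psi> C G"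
  proof
    fix f
    assume "f \<in> (\<Union>c\<in>G. incidence_edges ps \<psi> C c)"
    then obtain c where c: "c \<in> G" "f \<in> incidence_edges ps \<psi> C c"
      by blast
    then have "f \<in> snd (graph_of ps n \<psi> C)"
      using G by (auto simp: graph_edges_eq)
    then show "f \<in> snd (graph_of ps n \<psi> C) - incidence_edges_outside ps \<psi> C G"
      using c incidence_edges_outside_disjoint[OF c(1)] by blast
  qed
  then show ?thesis
    using card_UN_incidence_edges[OF wf G] card_mono finite_graph_edges[OF wf]
    by (metis finite_Diff)
qed

end

locale shift_pair = bpi_group +
  fixes n :: nat and C1 C2 :: "constr list" and D :: "nat \<Rightarrow> nat list"
    and e :: "nat \<Rightarrow> nat list list" and Good :: "nat set"
  assumes wf1: "instance_wf ps k n C1" and wf2: "instance_wf ps k n C2"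
    and same_scopes: "map fst C1 = map fst C2"
    and D_in_Hset: "\<And>x. x < n \<Longrightarrow> D x \<in> Hset ps"
    and e_in_Hpow: "\<And>c. c < length C1 \<Longrightarrow> e c \<in> Hpow ps k"
    and shift_solution: "\<And>c \<alpha>. c < length C1 \<Longrightarrow> \<alpha> \<in> Hpow ps k \<Longrightarrow>
      tadd ps \<alpha> (snd (C1 ! c)) \<in> \<psi> \<Longrightarrow> tadd ps (tadd ps \<alpha> (e c)) (snd (C2 ! c)) \<in> \<psi>"
    and shift_Good: "\<And>c. c \<in> Good \<Longrightarrow> c < length C1 \<Longrightarrow> e c = map D (fst (C1 ! c))"
begin

abbreviation "\<pi> \<equiv> shift_vtx ps D e"

lemma length_eq: "length C2 = length C1"
  using same_scopes by (metis length_map)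

lemma fst_eq: "c < length C1 \<Longrightarrow> fst (C2 ! c) = fst (C1 ! c)"
  using same_scopes by (metis length_eq nth_map)

lemma shift_constraint_vertex:
  assumes c: "c < length C1" and \<alpha>: "Con c \<alpha> \<in> constraint_vertices ps \<psi> c (C1 ! c)"
  shows "Con c (tadd ps \<alpha> (e c)) \<in> constraint_vertices ps \<psi> c (C2 ! c)"
proof -
  have "\<alpha> \<in> Hpow ps k" "tadd ps \<alpha> (snd (C1 ! c)) \<in> \<psi>"
    using \<alpha> instance_wfD[OF wf1 c] by (auto simp: Con_in_constraint_vertices_iff)
  moreover from this have "tadd ps \<alpha> (e c) \<in> Hpow ps k"
    using e_in_Hpow[OF c] moduli_pos by (auto intro!: tadd_in_Hpow simp: HpowD)
  ultimately show ?thesis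
    using shift_solution[OF c] instance_wfD[OF wf1 c] fst_eq[OF c]
    by (simp add: Con_in_constraint_vertices_iff)
qed

lemma shift_vtx_in_graph:
  assumes v: "v \<in> fst (graph_of ps n \<psi> C1)"
  shows "\<pi> v \<in> fst (graph_of ps n \<psi> C2)"
proof (cases v)
  case (Con c \<alpha>)
  then have "c < length C1" "Con c \<alpha> \<in> constraint_vertices ps \<psi> c (C1 ! c)"
    using v by (auto simp: in_graph_iff Con_in_constraint_vertices_iff)
  then show ?thesis
    using Con shift_constraint_vertex length_eq
    by (auto simp: in_graph_iff Con_in_constraint_vertices_iff)
qed (use v D_in_Hset moduli_pos in \<open>auto simp: in_graph_iff hadd_in_Hset row_rep_in_Hset mod_modulus_less\<close>)

lemma shift_clique_edge:
  assumes c: "c < length C1" and f: "f \<in> clique_edges ps \<psi> C1 c"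
  shows "\<pi> ` f \<in> clique_edges ps \<psi> C2 c"
proof -
  obtain \<alpha> \<beta> where \<alpha>: "Con c \<alpha> \<in> constraint_vertices ps \<psi> c (C1 ! c)"
    and \<beta>: "Con c \<beta> \<in> constraint_vertices ps \<psi> c (C1 ! c)"
    and ne: "\<alpha> \<noteq> \<beta>" and f_eq: "f = {Con c \<alpha>, Con c \<beta>}"
    using f by (auto simp: clique_edges_def constraint_vertices_def)
  have "\<alpha> \<in> Hpow ps k" "\<beta> \<in> Hpow ps k"
    using \<alpha> \<beta> instance_wfD[OF wf1 c] by (auto simp: Con_in_constraint_vertices_iff)
  then have "tadd ps \<alpha> (e c) \<noteq> tadd ps \<beta> (e c)"
    using ne tadd_tneg_cancel e_in_Hpow[OF c] by metis
  moreover have "\<pi> ` f = {Con c (tadd ps \<alpha> (e c)), Con c (tadd ps \<beta> (e c))}"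
    using f_eq by simp
  ultimately show ?thesis
    using shift_constraint_vertex[OF c \<alpha>] shift_constraint_vertex[OF c \<beta>]
    unfolding clique_edges_def by blast
qed

lemma shift_incidence_edge:
  assumes c: "c < length C1" "c \<in> Good" and f: "f \<in> incidence_edges ps \<psi> C1 c"
  shows "\<pi> ` f \<in> incidence_edges ps \<psi> C2 c"
proof -
  obtain \<alpha> l where \<alpha>: "Con c \<alpha> \<in> constraint_vertices ps \<psi> c (C1 ! c)"
    and l: "l < length (fst (C1 ! c))" and f_eq: "f = {Con c \<alpha>, Var (fst (C1 ! c) ! l) (\<alpha> ! l)}"
    using f by (auto simp: incidence_edges_def)
  have "length \<alpha> = k"
    using \<alpha> instance_wfD[OF wf1 c(1)] by (auto simp: Con_in_constraint_vertices_iff HpowD)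
  then have "tadd ps \<alpha> (e c) ! l = hadd ps (\<alpha> ! l) (D (fst (C1 ! c) ! l))"
    using l instance_wfD[OF wf1 c(1)] shift_Good[OF c(2,1)] by simp
  then have "\<pi> ` f = {Con c (tadd ps \<alpha> (e c)), Var (fst (C2 ! c) ! l) (tadd ps \<alpha> (e c) ! l)}"
    using f_eq fst_eq[OF c(1)] by simp
  then show ?thesis
    using shift_constraint_vertex[OF c(1) \<alpha>] l fst_eq[OF c(1)] unfolding incidence_edges_def
    by (intro CollectI exI[where x="tadd ps \<alpha> (e c)"] exI[where x=l]) simp
qed

lemma shift_edge:
  assumes f: "f \<in> snd (graph_of ps n \<psi> C1)" and f_kept: "f \<notin> incidence_edges_outside ps \<psi> C1 Good"
  shows "\<pi> ` f \<in> snd (graph_of ps n \<psi> C2) - incidence_edges_outside ps \<psi> C2 Good"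
  using f
proof (cases rule: graph_edge_cases)
  case (gadget x)
  then have "\<pi> ` f \<in> gadget_edges ps x"
    using shift_gadget_edge moduli_pos D_in_Hset by blast
  then show ?thesis
    using gadget(1) gadget_edge_notin_outside by (auto simp: graph_edges_eq)
next
  case (clique c)
  then have "\<pi> ` f \<in> clique_edges ps \<psi> C2 c"
    by (rule shift_clique_edge)
  then show ?thesis
    using clique(1) length_eq clique_edge_notin_outside by (auto simp: graph_edges_eq)
next
  case (incidence c)
  then have "c \<in> Good"
    using f_kept by (auto simp: incidence_edges_outside_def)
  then have "\<pi> ` f \<in> incidence_edges ps \<psi> C2 c"
    using incidence shift_incidence_edge by blast
  then show ?thesis
    using incidence(1) length_eq incidence_edges_outside_disjoint[OF \<open>c \<in> Good\<close>]
    by (auto simp: graph_edges_eq)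
qed

end

lemma hadd_list_update_absorb:
  "length r = length ps \<Longrightarrow> (hadd ps (r[i := v]) d)[i := w] = (hadd ps r d)[i := w]"
  by (cases "i < length ps") (auto intro!: nth_equalityI simp: nth_list_update list_update_beyond)

lemma row_rep_shift_inverse:
  assumes "r \<in> Hset ps" "r ! i = 0" "d \<in> Hset ps" "hadd ps d d' = hzero ps"
  shows "(hadd ps ((hadd ps r d)[i := 0]) d')[i := 0] = r"
proof -
  have "(hadd ps ((hadd ps r d)[i := 0]) d')[i := 0] = (hadd ps (hadd ps r d) d')[i := 0]"
    by (simp add: hadd_list_update_absorb)
  also have "\<dots> = r[i := 0]"
    using assms by (simp add: hadd_assoc hadd_hzero)
  also have "\<dots> = r"
    using assms(2) by (metis list_update_id)
  finally show ?thesis .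
qed

lemma mod_shift_inverse: "j < (p::nat) \<Longrightarrow> (a + b) mod p = 0 \<Longrightarrow> ((j + a) mod p + b) mod p = j"
  by (metis add.assoc mod_add_left_eq mod_add_right_eq add_0_right mod_less)

lemma hadd_eq_hzero_nth:
  "hadd ps d d' = hzero ps \<Longrightarrow> i < length ps \<Longrightarrow> (d ! i + d' ! i) mod ps ! i = 0"
  by (metis nth_hadd nth_hzero)

context bpi_group
begin

lemma shift_vtx_inverse:
  assumes wf: "instance_wf ps k n C"
    and D: "\<And>x. x < n \<Longrightarrow> D x \<in> Hset ps \<and> hadd ps (D x) (D' x) = hzero ps"
    and e: "\<And>c. c < length C \<Longrightarrow> e c \<in> Hpow ps k \<and> e' c \<in> Hpow ps k \<and> tadd ps (e c) (e' c) = tzero ps k"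
    and v: "v \<in> fst (graph_of ps n \<psi> C)"
  shows "shift_vtx ps D' e' (shift_vtx ps D e v) = v"
proof (cases v)
  case (Var x b)
  then show ?thesis
    using v D[of x] by (simp add: in_graph_iff hadd_assoc hadd_hzero)
next
  case (RowW x i r)
  then show ?thesis
    using v D[of x] by (simp add: in_graph_iff row_rep_shift_inverse)
next
  case (RowLeaf x i r l)
  then show ?thesis
    using v D[of x] by (simp add: in_graph_iff row_rep_shift_inverse)
next
  case (CycU x i r j)
  then show ?thesis
    using v D[of x] by (simp add: in_graph_iff row_rep_shift_inverse mod_shift_inverse hadd_eq_hzero_nth)
next
  case (CycV x i r j)
  then show ?thesis
    using v D[of x] by (simp add: in_graph_iff row_rep_shift_inverse mod_shift_inverse hadd_eq_hzero_nth)
next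
  case (Con c \<alpha>)
  then have "c < length C" "\<alpha> \<in> Hpow ps k"
    using v instance_wfD[OF wf] by (auto simp: in_graph_iff)
  then have "tadd ps (tadd ps \<alpha> (e c)) (e' c) = tadd ps \<alpha> (tadd ps (e c) (e' c))"
    using e HpowD(1) by (intro tadd_assoc) blast+
  then show ?thesis
    using Con e \<open>c < length C\<close> \<open>\<alpha> \<in> Hpow ps k\<close> by (simp add: tadd_tzero)
qed

end

lemma GI_ge_ratio:
  assumes "bij_betw \<pi> (fst G1) (fst G2)" "finite (snd G1)"
  shows "real (card {f \<in> snd G1. \<pi> ` f \<in> snd G2}) / real (max (card (snd G1)) (card (snd G2))) \<le> GI G1 G2"
proof -
  let ?M = "real (max (card (snd G1)) (card (snd G2)))"
  let ?r = "\<lambda>\<pi>. real (card {f \<in> snd G1. \<pi> ` f \<in> snd G2}) / ?M"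
  have "?r ` {\<pi>. bij_betw \<pi> (fst G1) (fst G2)} \<subseteq> (\<lambda>a. real a / ?M) ` {..card (snd G1)}"
    using assms(2) by (auto intro!: imageI card_mono)
  then have "finite (?r ` {\<pi>. bij_betw \<pi> (fst G1) (fst G2)})"
    by (rule finite_subset) simp
  then show ?thesis
    unfolding GI_def using assms(1) by (intro Max_ge) auto
qed

text \<open>The second graph exceeds the kept part by at most b edges because the inverse map
  sends its edges outside B2 injectively into the kept part.\<close>

lemma GI_ge_kept_edges:
  fixes G1 :: "'v set \<times> 'v set set" and G2 :: "'w set \<times> 'w set set"
  assumes bij: "bij_betw \<pi> (fst G1) (fst G2)" and inj: "inj_on \<pi>' (fst G2)"
    and E2: "snd G2 \<subseteq> Pow (fst G2)"
    and fin: "finite (snd G1)" "finite (snd G2)" "finite B1" "finite B2"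
    and fwd: "\<And>f. f \<in> snd G1 - B1 \<Longrightarrow> \<pi> ` f \<in> snd G2"
    and bwd: "\<And>f. f \<in> snd G2 - B2 \<Longrightarrow> \<pi>' ` f \<in> snd G1 - B1"
    and B: "card B1 \<le> b" "card B2 \<le> b"
  shows "real (card (snd G1 - B1)) / real (card (snd G1 - B1) + b) \<le> GI G1 G2"
proof -
  let ?K = "snd G1 - B1" and ?P = "{f \<in> snd G1. \<pi> ` f \<in> snd G2}"
  let ?M = "max (card (snd G1)) (card (snd G2))"
  have kept: "card ?K \<le> card ?P"
    using fwd fin by (intro card_mono) auto
  have "card (snd G1) \<le> card (?K \<union> B1)"
    using fin by (intro card_mono) auto
  then have E1: "card (snd G1) \<le> card ?K + b"
    using card_Un_le[of ?K B1] B by linarith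
  have "inj_on (image \<pi>') (snd G2 - B2)"
    using inj_on_image_Pow[OF inj] E2 by (meson Diff_subset inj_on_subset subset_trans)
  then have "card (snd G2 - B2) \<le> card ?K"
    using bwd fin by (intro card_inj_on_le[where f="image \<pi>'"]) auto
  moreover have "card (snd G2) \<le> card ((snd G2 - B2) \<union> B2)"
    using fin by (intro card_mono) auto
  ultimately have E2: "card (snd G2) \<le> card ?K + b"
    using card_Un_le[of "snd G2 - B2" B2] B by linarith
  have "real (card ?K) / real (card ?K + b) \<le> real (card ?K) / real ?M"
  proof (cases "?M = 0")
    case False
    then show ?thesis
      using E1 E2 by (intro divide_left_mono) auto
  next
    case True
    then show ?thesis
      using E1 fin(1) kept card_mono[OF fin(1), of ?P] by simp
  qed
  also have "\<dots> \<le> real (card ?P) / real ?M"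
    using kept by (simp add: divide_right_mono)
  also have "\<dots> \<le> GI G1 G2"
    by (rule GI_ge_ratio[OF bij fin(1)])
  finally show ?thesis .
qed

lemma ratio_le_kept_ratio:
  fixes s m M K :: nat
  assumes "s \<le> m" "s * M \<le> K" "0 < M"
  shows "real s / real m \<le> real K / real (K + (m - s) * M)"
proof (cases "s = 0")
  case False
  let ?D = "real K + (real m - real s) * real M"
  have "0 < K"
    using False assms(2,3) by (metis less_le_trans nat_0_less_mult_iff not_gr0)
  then have "0 < real m" "0 < ?D"
    using False assms(1) by (auto intro!: add_pos_nonneg)
  moreover have "(real m - real s) * (real s * real M) \<le> (real m - real s) * real K"
    using assms(1,2) by (intro mult_left_mono) (simp_all flip: of_nat_mult)
  then have "real s * ?D \<le> real K * real m"
    by (simp add: algebra_simps)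
  ultimately have "real s / real m \<le> real K / ?D"
    by (simp add: divide_le_eq le_divide_eq mult.commute)
  moreover have "real (K + (m - s) * M) = ?D"
    using assms(1) by (simp add: of_nat_diff)
  ultimately show ?thesis
    by (simp only:)
qed simp

definition satisfied :: "nat list \<Rightarrow> nat list list set \<Rightarrow> constr list \<Rightarrow> (nat \<Rightarrow> nat list) \<Rightarrow> nat set" where
  "satisfied ps \<psi> C \<sigma> = {c. c < length C \<and> satisfies ps \<psi> (C ! c) \<sigma>}"

lemma csp_val_attained:
  assumes "moduli_pos ps"
  shows "\<exists>\<sigma>\<in>{..<n} \<rightarrow>\<^sub>E Hset ps. csp_val ps n \<psi> C = real (card (satisfied ps \<psi> C \<sigma>)) / real (length C)"
proof -
  let ?F = "\<lambda>\<sigma>. real (card (satisfied ps \<psi> C \<sigma>)) / real (length C)"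
  have "{..<n} \<rightarrow>\<^sub>E Hset ps \<noteq> {}"
    using hzero_in_Hset[OF assms] by (auto simp: PiE_eq_empty_iff)
  then have "csp_val ps n \<psi> C \<in> ?F ` ({..<n} \<rightarrow>\<^sub>E Hset ps)"
    unfolding csp_val_def satisfied_def by (intro Max_in) (auto simp: finite_PiE finite_Hset)
  then show ?thesis
    by auto
qed

lemma length_zero_instance [simp]: "length (zero_instance ps C) = length C"
  by (simp add: zero_instance_def)

lemma map_fst_zero_instance: "map fst (zero_instance ps C) = map fst C"
  by (simp add: zero_instance_def case_prod_beta comp_def)

lemma nth_zero_instance:
  "instance_wf ps k n C \<Longrightarrow> c < length C \<Longrightarrow> zero_instance ps C ! c = (fst (C ! c), tzero ps k)"
  using instance_wfD(4) by (fastforce simp: zero_instance_def tzero_def HpowD map_replicate_const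
      split: prod.splits)

text \<open>A vertex of a satisfied constraint is translated by minus the assignment, one of an
  unsatisfied constraint by the constraint's own shift; in both cases it lands in psi.\<close>

definition constraint_shift :: "nat list \<Rightarrow> constr list \<Rightarrow> (nat \<Rightarrow> nat list) \<Rightarrow> nat set \<Rightarrow> nat \<Rightarrow> nat list list" where
  "constraint_shift ps C \<sigma> S c = (if c \<in> S then map (\<lambda>x. hneg ps (\<sigma> x)) (fst (C ! c)) else snd (C ! c))"

context bpi_group
begin

lemma instance_wf_zero_instance:
  assumes wf: "instance_wf ps k n C"
  shows "instance_wf ps k n (zero_instance ps C)"
  unfolding instance_wf_def
proof
  fix c
  assume "c \<in> set (zero_instance ps C)"
  then obtain i where "i < length C" "c = (fst (C ! i), tzero ps k)"
    using nth_zero_instance[OF wf] by (auto simp: in_set_conv_nth)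
  then show "length (fst c) = k \<and> distinct (fst c) \<and> set (fst c) \<subseteq> {..<n} \<and> snd c \<in> Hpow ps k"
    using instance_wfD[OF wf] tzero_in_Hpow by simp
qed

lemma shift_vtx_bij_betw:
  assumes fwd: "shift_pair ps k \<psi> n C1 C2 D e G" and bwd: "shift_pair ps k \<psi> n C2 C1 D' e' G'"
    and D_inv: "\<And>x. x < n \<Longrightarrow> hadd ps (D x) (D' x) = hzero ps"
    and e_inv: "\<And>c. c < length C1 \<Longrightarrow> tadd ps (e c) (e' c) = tzero ps k"
  shows "bij_betw (shift_vtx ps D e) (fst (graph_of ps n \<psi> C1)) (fst (graph_of ps n \<psi> C2))"
proof (rule bij_betw_byWitness[where f'="shift_vtx ps D' e'"])
  note F = shift_pair.D_in_Hset[OF fwd] shift_pair.e_in_Hpow[OF fwd] shift_pair.wf1[OF fwd]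
  note B = shift_pair.D_in_Hset[OF bwd] shift_pair.e_in_Hpow[OF bwd] shift_pair.wf1[OF bwd]
  have len: "length C2 = length C1"
    using shift_pair.length_eq[OF fwd] .
  show "\<forall>v\<in>fst (graph_of ps n \<psi> C1). shift_vtx ps D' e' (shift_vtx ps D e v) = v"
    using F B D_inv e_inv len by (auto intro!: shift_vtx_inverse[OF F(3)])
  have "hadd ps (D' x) (D x) = hzero ps" if "x < n" for x
    using D_inv[OF that] by (simp add: hadd_commute)
  moreover have "tadd ps (e' c) (e c) = tzero ps k" if "c < length C1" for c
    using e_inv[OF that] F(2)[OF that] B(2)[of c] that len by (simp add: tadd_commute HpowD)
  ultimately show "\<forall>v\<in>fst (graph_of ps n \<psi> C2). shift_vtx ps D e (shift_vtx ps D' e' v) = v"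
    using F B len by (auto intro!: shift_vtx_inverse[OF B(3)])
  show "shift_vtx ps D e ` fst (graph_of ps n \<psi> C1) \<subseteq> fst (graph_of ps n \<psi> C2)"
    using shift_pair.shift_vtx_in_graph[OF fwd] by blast
  show "shift_vtx ps D' e' ` fst (graph_of ps n \<psi> C2) \<subseteq> fst (graph_of ps n \<psi> C1)"
    using shift_pair.shift_vtx_in_graph[OF bwd] by blast
qed

lemma constraint_shift_in_Hpow:
  assumes wf: "instance_wf ps k n C" and \<sigma>: "\<And>x. x < n \<Longrightarrow> \<sigma> x \<in> Hset ps" and c: "c < length C"
  shows "constraint_shift ps C \<sigma> S c \<in> Hpow ps k"
  using instance_wfD[OF wf c] moduli_pos
  by (auto simp: constraint_shift_def intro!: HpowI hneg_in_Hset)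

lemma tneg_constraint_shift:
  assumes wf: "instance_wf ps k n C" and \<sigma>: "\<And>x. x < n \<Longrightarrow> \<sigma> x \<in> Hset ps"
    and c: "c < length C" "c \<in> S"
  shows "tneg ps (constraint_shift ps C \<sigma> S c) = map \<sigma> (fst (C ! c))"
proof -
  have "fst (C ! c) ! l < n" if "l < length (fst (C ! c))" for l
    using instance_wfD[OF wf c(1)] that by (meson lessThan_iff nth_mem subsetD)
  then show ?thesis
    using c \<sigma> moduli_pos by (intro nth_equalityI) (auto simp: constraint_shift_def hneg_hneg)
qed

lemma shift_to_zero_solution:
  assumes wf: "instance_wf ps k n C" and \<sigma>: "\<And>x. x < n \<Longrightarrow> \<sigma> x \<in> Hset ps"
    and S: "S \<subseteq> satisfied ps \<psi> C \<sigma>" and c: "c < length C"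
    and \<alpha>: "\<alpha> \<in> Hpow ps k" "tadd ps \<alpha> (snd (C ! c)) \<in> \<psi>"
  shows "tadd ps \<alpha> (constraint_shift ps C \<sigma> S c) \<in> \<psi>"
proof (cases "c \<in> S")
  case True
  let ?s = "map \<sigma> (fst (C ! c))" and ?a = "snd (C ! c)"
  note js = instance_wfD[OF wf c]
  have "tadd ps ?s ?a \<in> \<psi>"
    using S True by (auto simp: satisfied_def satisfies_def)
  then have "tadd ps (tadd ps \<alpha> ?a) (tneg ps (tadd ps ?s ?a)) \<in> \<psi>"
    using \<alpha> by (simp add: tadd_in_psi tneg_in_psi)
  moreover have "tadd ps (tadd ps \<alpha> ?a) (tneg ps (tadd ps ?s ?a)) = tadd ps \<alpha> (constraint_shift ps C \<sigma> S c)"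
  proof (rule nth_equalityI)
    fix l
    assume "l < length (tadd ps (tadd ps \<alpha> ?a) (tneg ps (tadd ps ?s ?a)))"
    then have l: "l < k"
      using js \<alpha> by (simp add: HpowD)
    then have "fst (C ! c) ! l < n"
      using js by (meson lessThan_iff nth_mem subsetD)
    with l show "tadd ps (tadd ps \<alpha> ?a) (tneg ps (tadd ps ?s ?a)) ! l = tadd ps \<alpha> (constraint_shift ps C \<sigma> S c) ! l"
      using True js \<alpha> \<sigma> moduli_pos by (simp add: constraint_shift_def HpowD hadd_hneg_hadd_cancel)
  qed (use True js \<alpha> in \<open>simp add: constraint_shift_def HpowD\<close>)
  ultimately show ?thesis
    by simp
qed (use \<alpha> in \<open>simp add: constraint_shift_def\<close>)

lemma shift_from_zero_solution:
  assumes wf: "instance_wf ps k n C" and \<sigma>: "\<And>x. x < n \<Longrightarrow> \<sigma> x \<in> Hset ps"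
    and S: "S \<subseteq> satisfied ps \<psi> C \<sigma>" and c: "c < length C" and \<alpha>: "\<alpha> \<in> \<psi>"
  shows "tadd ps (tadd ps \<alpha> (tneg ps (constraint_shift ps C \<sigma> S c))) (snd (C ! c)) \<in> \<psi>"
proof (cases "c \<in> S")
  case True
  let ?s = "map \<sigma> (fst (C ! c))" and ?a = "snd (C ! c)"
  note js = instance_wfD[OF wf c]
  have "tneg ps (constraint_shift ps C \<sigma> S c) = ?s"
    using tneg_constraint_shift[OF wf \<sigma> c True] .
  moreover have "length \<alpha> = k"
    using \<alpha> psi_subset_Hpow HpowD by blast
  moreover have "tadd ps ?s ?a \<in> \<psi>"
    using S True by (auto simp: satisfied_def satisfies_def)
  ultimately show ?thesis
    using js \<alpha> by (simp add: tadd_assoc HpowD tadd_in_psi)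
next
  case False
  have "\<alpha> \<in> Hpow ps k"
    using \<alpha> psi_subset_Hpow by blast
  then show ?thesis
    using False \<alpha> instance_wfD(4)[OF wf c] moduli_pos
    by (metis constraint_shift_def tadd_tneg_cancel tneg_in_Hpow tneg_tneg HpowD(1))
qed

lemma GI_zero_instance_ge_satisfied:
  assumes k: "0 < k" and wf: "instance_wf ps k n C" and \<sigma>: "\<And>x. x < n \<Longrightarrow> \<sigma> x \<in> Hset ps"
  shows "real (card (satisfied ps \<psi> C \<sigma>)) / real (length C)
    \<le> GI (graph_of ps n \<psi> C) (graph_of ps n \<psi> (zero_instance ps C))"
proof -
  define S where "S = satisfied ps \<psi> C \<sigma>"
  define C0 where "C0 = zero_instance ps C"
  define e where "e = constraint_shift ps C \<sigma> S"
  define e' where "e' = (\<lambda>c. tneg ps (e c))"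
  have S: "S \<subseteq> {..<length C}" "S \<subseteq> satisfied ps \<psi> C \<sigma>"
    by (auto simp: S_def satisfied_def)
  have wf0: "instance_wf ps k n C0"
    using wf by (simp add: C0_def instance_wf_zero_instance)
  have C0: "c < length C \<Longrightarrow> C0 ! c = (fst (C ! c), tzero ps k)" for c
    using wf by (simp add: C0_def nth_zero_instance)
  have e: "c < length C \<Longrightarrow> e c \<in> Hpow ps k" for c
    using constraint_shift_in_Hpow[OF wf \<sigma>] by (simp add: e_def)
  have fwd: "shift_pair ps k \<psi> n C C0 (\<lambda>x. hneg ps (\<sigma> x)) e S"
  proof (intro shift_pair.intro shift_pair_axioms.intro bpi_group_axioms wf wf0)
    fix c \<alpha>
    assume c: "c < length C" and "\<alpha> \<in> Hpow ps k" "tadd ps \<alpha> (snd (C ! c)) \<in> \<psi>"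
    then have "tadd ps \<alpha> (e c) \<in> \<psi>"
      using shift_to_zero_solution[OF wf \<sigma> S(2)] by (simp add: e_def)
    moreover from this have "tadd ps \<alpha> (e c) \<in> Hpow ps k"
      using psi_subset_Hpow by blast
    ultimately show "tadd ps (tadd ps \<alpha> (e c)) (snd (C0 ! c)) \<in> \<psi>"
      using C0[OF c] by (simp add: tadd_tzero)
  qed (use e moduli_pos in \<open>auto simp: C0_def map_fst_zero_instance e_def constraint_shift_def hneg_in_Hset\<close>)
  have bwd: "shift_pair ps k \<psi> n C0 C \<sigma> e' S"
  proof (intro shift_pair.intro shift_pair_axioms.intro bpi_group_axioms wf wf0)
    fix c \<alpha>
    assume "c < length C0" "\<alpha> \<in> Hpow ps k" "tadd ps \<alpha> (snd (C0 ! c)) \<in> \<psi>"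
    then show "tadd ps (tadd ps \<alpha> (e' c)) (snd (C ! c)) \<in> \<psi>"
      using shift_from_zero_solution[OF wf \<sigma> S(2)] C0 by (simp add: C0_def e'_def e_def tadd_tzero)
  next
    fix c
    assume "c < length C0"
    then show "e' c \<in> Hpow ps k"
      using e[of c] moduli_pos by (simp add: C0_def e'_def tneg_in_Hpow HpowD)
  next
    fix c
    assume "c \<in> S" "c < length C0"
    then show "e' c = map \<sigma> (fst (C0 ! c))"
      using tneg_constraint_shift[OF wf \<sigma>] C0 by (simp add: C0_def e'_def e_def)
  qed (use \<sigma> in \<open>simp_all add: C0_def map_fst_zero_instance\<close>)
  have bij: "bij_betw (shift_vtx ps (\<lambda>x. hneg ps (\<sigma> x)) e) (fst (graph_of ps n \<psi> C)) (fst (graph_of ps n \<psi> C0))"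
    using \<sigma> e by (intro shift_vtx_bij_betw[OF fwd bwd]) (auto simp: e'_def tadd_tneg hadd_commute hadd_hneg)
  have inj: "inj_on (shift_vtx ps \<sigma> e') (fst (graph_of ps n \<psi> C0))"
    using \<sigma> e C0 by (intro bij_betw_imp_inj_on[OF shift_vtx_bij_betw[OF bwd fwd]])
      (auto simp: e'_def C0_def tadd_tneg tadd_commute hadd_hneg HpowD)
  let ?K = "snd (graph_of ps n \<psi> C) - incidence_edges_outside ps \<psi> C S"
  let ?b = "(length C - card S) * (k * card \<psi>)"
  have "real (card ?K) / real (card ?K + ?b) \<le> GI (graph_of ps n \<psi> C) (graph_of ps n \<psi> C0)"
  proof (rule GI_ge_kept_edges[OF bij inj graph_edges_subset_Pow[OF wf0] finite_graph_edges[OF wf]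
        finite_graph_edges[OF wf0]])
    show "finite (incidence_edges_outside ps \<psi> C S)" "finite (incidence_edges_outside ps \<psi> C0 S)"
      by (simp_all add: incidence_edges_outside_def finite_incidence_edges)
    show "\<And>f. f \<in> ?K \<Longrightarrow> shift_vtx ps (\<lambda>x. hneg ps (\<sigma> x)) e ` f \<in> snd (graph_of ps n \<psi> C0)"
      using shift_pair.shift_edge[OF fwd] by blast
    show "\<And>f. f \<in> snd (graph_of ps n \<psi> C0) - incidence_edges_outside ps \<psi> C0 S \<Longrightarrow>
        shift_vtx ps \<sigma> e' ` f \<in> ?K"
      using shift_pair.shift_edge[OF bwd] by blast
    show "card (incidence_edges_outside ps \<psi> C S) \<le> ?b"
      by (rule card_incidence_edges_outside[OF wf S(1)])
    show "card (incidence_edges_outside ps \<psi> C0 S) \<le> ?b"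
      using card_incidence_edges_outside[OF wf0] S(1) by (simp add: C0_def)
  qed
  moreover have "real (card S) / real (length C) \<le> real (card ?K) / real (card ?K + ?b)"
    using card_kept_edges[OF wf S(1)] S(1) k card_psi_pos
    by (intro ratio_le_kept_ratio) (auto intro: card_mono[OF finite_lessThan, of _ "length C", simplified])
  ultimately show ?thesis
    by (simp add: S_def C0_def)
qed

end

theorem lemma7p3:
  fixes ps :: "nat list" and k n :: nat and \<psi> :: "nat list list set"
    and C :: "constr list" and \<epsilon> :: real
  assumes "\<forall>i<length ps. ps ! i \<ge> 2"
    and "k \<ge> 3"
    and "bpi_subgroup ps k \<psi>"
    and "instance_wf ps k n C"
    and "csp_val ps n \<psi> C \<ge> 1 - \<epsilon>"
  shows "GI (graph_of ps n \<psi> C) (graph_of ps n \<psi> (zero_instance ps C)) \<ge> 1 - \<epsilon>"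
proof -
  have pos: "moduli_pos ps"
    using assms(1) by (auto simp: moduli_pos_def)
  interpret bpi_group ps k \<psi>
    using pos assms(3) by unfold_locales
  obtain \<sigma> where \<sigma>: "\<sigma> \<in> {..<n} \<rightarrow>\<^sub>E Hset ps"
    and val: "csp_val ps n \<psi> C = real (card (satisfied ps \<psi> C \<sigma>)) / real (length C)"
    using csp_val_attained[OF pos] by blast
  have "csp_val ps n \<psi> C \<le> GI (graph_of ps n \<psi> C) (graph_of ps n \<psi> (zero_instance ps C))"
    unfolding val using assms(2,4) \<sigma> by (intro GI_zero_instance_ge_satisfied) auto
  then show ?thesis
    using assms(5) by linarith
qed

end
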